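(* Let $n\ge3$, let $U\subseteq\mathbb{R}^n$ be a convex open set, and for $1\le i,j\le n$ let $g_{ij}:\mathbb{R}\to\mathbb{R}$ be continuously differentiable functions with $g_{ij}=g_{ji}$, such that for all $x\in U$: $g_{ij}'(x_i+x_j)\ge\ell$ for all $i\ne j$ (for some fixed $\ell>0$) and $g_{ii}'(2x_i)\ge0$ for all $i$. Define $F:U\to\mathbb{R}^n$ by $F(x)=(F_1(x),\dots,F_n(x))$ with $F_i(x)=\sum_{j=1}^n g_{ij}(x_i+x_j)$. Then $F$ is injective on $U$, and for all $d,\hat d\in F(U)$, $$|F^{-1}(d)-F^{-1}(\hat d)|_\infty\le\frac{3n-4}{2\ell(n-1)(n-2)}\,|d-\hat d|_\infty.$$
   Context: $|v|_\infty=\max_i|v_i|$ is the maximum norm on $\mathbb{R}^n$. *)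

theory Defs
  imports "HOL-Analysis.Analysis"
begin

definition maxnorm :: "real ^ 'n \<Rightarrow> real" where
  "maxnorm v = Max (range (\<lambda>i. \<bar>v $ i\<bar>))"

end

theory Submission
  imports Defs
begin

(* For x, y in U every difference g_ij(x_i + x_j) - g_ij(y_i + y_j) is c_ij times
   (x - y)_i + (x - y)_j, where the secant slope c_ij is, by the mean value theorem along
   the segment [y, x] (contained in U by convexity), a derivative value g_ij' at a point of U.
   Hence F x - F y = P_c (x - y) for the "pair-sum" operator P_c d = (sum_j c_ij (d_i + d_j))_i
   with c symmetric, c_ij >= l off the diagonal and c_ii >= 0.  The core of the proof is the
   purely algebraic estimate  K l |d|_inf <= |P_c d|_inf  with K = 2(n-1)(n-2)/(3n-4):
   if d attains its maximum norm M at d_k >= 0, the k-th row of P_c d bounds |P_c d|_inf from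
   below by l((n-2)M + sum d), and the quadratic form sum_i d_i (P_c d)_i bounds it (times
   |d|_1) by l((n-2)|d|_2^2 + (sum d)^2); a case split on sum d combined with Cauchy-Schwarz
   and a one-variable polynomial inequality yields the estimate. *)

lemma maxnorm_ge: "\<bar>v $ i\<bar> \<le> maxnorm v"
  unfolding maxnorm_def by (rule Max_ge) auto

lemma maxnorm_attained: "\<exists>k. \<bar>v $ k\<bar> = maxnorm v"
proof -
  have "maxnorm v \<in> range (\<lambda>i. \<bar>v $ i\<bar>)" unfolding maxnorm_def by (rule Max_in) auto
  then show ?thesis by auto
qed

lemma maxnorm_zero: "maxnorm 0 = 0"
  by (simp add: maxnorm_def)

lemma maxnorm_nonneg: "maxnorm v \<ge> 0"
  using abs_ge_zero order_trans maxnorm_ge by blast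

lemma maxnorm_uminus: "maxnorm (- v) = maxnorm v"
  by (simp add: maxnorm_def)

lemma maxnorm_le_zero_imp_zero:
  assumes "maxnorm v \<le> 0" shows "v = 0"
  using order_trans[OF maxnorm_ge assms] by (simp add: vec_eq_iff)

lemma sum_mult_le_l1_maxnorm:
  "(\<Sum>i\<in>UNIV. v $ i * w $ i) \<le> (\<Sum>i\<in>UNIV. \<bar>v $ i\<bar>) * maxnorm w"
proof -
  have "v $ i * w $ i \<le> \<bar>v $ i\<bar> * maxnorm w" for i
  proof -
    have "v $ i * w $ i \<le> \<bar>v $ i\<bar> * \<bar>w $ i\<bar>" by (metis abs_ge_self abs_mult)
    also have "\<dots> \<le> \<bar>v $ i\<bar> * maxnorm w" by (intro mult_left_mono maxnorm_ge) simp
    finally show ?thesis .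
  qed
  then show ?thesis by (simp add: sum_distrib_right sum_mono)
qed

(* The scalar inequality behind the second case of the pair-sum estimate: with
   s >= (N-2)^2/(3N-4) M and u >= M + s, the difference of the two sides equals
   M (2(N-2)/(3N-4) (r+t) + 2(N-2)^2/(3N-4) r) + (N-2)(r+t)^2/(N-1) + r^2 for the slacks
   r = s - (N-2)^2/(3N-4) M >= 0 and t = u - M - s >= 0, hence is nonnegative. *)
lemma quadratic_estimate:
  fixes N M s u :: real
  assumes N: "N \<ge> 2" and M: "M \<ge> 0"
    and s: "s \<ge> (N - 2)\<^sup>2 / (3 * N - 4) * M" and u: "u \<ge> M + s"
  shows "2 * (N - 1) * (N - 2) / (3 * N - 4) * M * (M + u)
           \<le> (N - 2) * (M\<^sup>2 + u\<^sup>2 / (N - 1)) + s\<^sup>2"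
proof -
  define a where "a = 1 / (3 * N - 4)"
  define b where "b = 1 / (N - 1)"
  have a: "a * (3 * N - 4) = 1" "a \<ge> 0" and b: "b * (N - 1) = 1" "b \<ge> 0"
    using N by (simp_all add: a_def b_def)
  define r where "r = s - (N - 2)\<^sup>2 * a * M"
  define t where "t = u - M - s"
  have r: "r \<ge> 0" and t: "t \<ge> 0" using s u by (simp_all add: r_def t_def a_def)
  have "(N - 2) * (M\<^sup>2 + u\<^sup>2 * b) + s\<^sup>2 - 2 * (N - 1) * (N - 2) * a * M * (M + u)
      = M * (2 * (N - 2) * a * (r + t) + 2 * (N - 2)\<^sup>2 * a * r)
        + (N - 2) * (r + t)\<^sup>2 * b + r\<^sup>2"
    unfolding r_def t_def using a(1) b(1) by algebra
  moreover have "0 \<le> \<dots>"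
    using N M r t a b by (intro add_nonneg_nonneg mult_nonneg_nonneg) simp_all
  ultimately show ?thesis by (simp add: a_def b_def)
qed

definition secant_slope :: "(real \<Rightarrow> real) \<Rightarrow> (real \<Rightarrow> real) \<Rightarrow> real \<Rightarrow> real \<Rightarrow> real" where
  "secant_slope G G' p q = (if p = q then G' p else (G p - G q) / (p - q))"

lemma secant_slope_diff: "G p - G q = secant_slope G G' p q * (p - q)"
  by (simp add: secant_slope_def)

lemma secant_slope_mean_value:
  fixes U :: "'a::real_vector set" and \<phi> :: "'a \<Rightarrow> real"
  assumes U: "convex U" and x: "x \<in> U" and y: "y \<in> U" and \<phi>: "linear \<phi>"
    and G: "\<And>t. (G has_real_derivative G' t) (at t)"
  shows "\<exists>z\<in>U. secant_slope G G' (\<phi> x) (\<phi> y) = G' (\<phi> z)"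
proof (cases "\<phi> x = \<phi> y")
  case True
  then show ?thesis using x by (intro bexI[of _ x]) (simp_all add: secant_slope_def)
next
  case False
  define h where "h \<tau> = \<phi> y + \<tau> * (\<phi> x - \<phi> y)" for \<tau>
  have "((\<lambda>\<tau>. G (h \<tau>)) has_real_derivative G' (h \<tau>) * (\<phi> x - \<phi> y)) (at \<tau>)" for \<tau>
    unfolding h_def by (rule DERIV_chain2[OF G]) (auto intro!: derivative_eq_intros)
  then obtain \<tau> where \<tau>: "0 < \<tau>" "\<tau> < 1" and "G (h 1) - G (h 0) = G' (h \<tau>) * (\<phi> x - \<phi> y)"
    using MVT2[of 0 1 "\<lambda>\<tau>. G (h \<tau>)"] by force
  then have slope: "secant_slope G G' (\<phi> x) (\<phi> y) = G' (h \<tau>)"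
    using False by (simp add: secant_slope_def h_def)
  define z where "z = y + \<tau> *\<^sub>R (x - y)"
  have "z = (1 - \<tau>) *\<^sub>R y + \<tau> *\<^sub>R x" by (simp add: z_def algebra_simps)
  then have "z \<in> U" using convexD[OF U y x] \<tau> by simp
  moreover have "\<phi> z = h \<tau>"
    unfolding z_def h_def using \<phi> by (simp add: linear_add linear_diff linear_scale)
  ultimately show ?thesis using slope by metis
qed

definition pair_sum :: "('n \<Rightarrow> 'n \<Rightarrow> real) \<Rightarrow> real ^ 'n \<Rightarrow> real ^ 'n" where
  "pair_sum c d = (\<chi> i. \<Sum>j\<in>UNIV. c i j * (d $ i + d $ j))"

lemma pair_sum_uminus: "pair_sum c (- d) = - pair_sum c d"
  by (simp add: pair_sum_def vec_eq_iff sum_negf[symmetric] algebra_simps)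

(* Row bound: if d_k dominates all |d_j|, every d_k + d_j is nonnegative, so the k-th
   entry of P_c d is at least l times the sum of d_k + d_j over j different from k. *)
lemma row_estimate:
  fixes d :: "real ^ 'n"
  assumes off: "\<And>j. j \<noteq> k \<Longrightarrow> c k j \<ge> l" and diag: "c k k \<ge> 0"
    and dom: "\<And>j. \<bar>d $ j\<bar> \<le> d $ k"
  shows "l * ((real CARD('n) - 2) * d $ k + (\<Sum>j\<in>UNIV. d $ j)) \<le> pair_sum c d $ k"
proof -
  have "(\<Sum>j\<in>UNIV. l * (d $ k + d $ j) - (if j = k then 2 * l * d $ k else 0))
      \<le> (\<Sum>j\<in>UNIV. c k j * (d $ k + d $ j))"
  proof (rule sum_mono)
    fix j
    have "d $ k + d $ j \<ge> 0" using dom[of j] by linarith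
    then show "l * (d $ k + d $ j) - (if j = k then 2 * l * d $ k else 0) \<le> c k j * (d $ k + d $ j)"
      using off[of j] diag dom[of k] by (cases "j = k") (auto intro: mult_right_mono)
  qed
  moreover have "(\<Sum>j\<in>UNIV. l * (d $ k + d $ j) - (if j = k then 2 * l * d $ k else 0))
      = l * ((real CARD('n) - 2) * d $ k + (\<Sum>j\<in>UNIV. d $ j))"
    by (simp add: sum_subtractf sum.distrib sum_distrib_left[symmetric] algebra_simps)
  ultimately show ?thesis by (simp add: pair_sum_def)
qed

lemma pair_sum_inner_identity:
  fixes d :: "real ^ 'n"
  assumes sym: "\<And>i j. c i j = c j i"
  shows "2 * (\<Sum>i\<in>UNIV. d $ i * pair_sum c d $ i)
    = (\<Sum>i\<in>UNIV. \<Sum>j\<in>UNIV. c i j * (d $ i + d $ j)\<^sup>2)"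
proof -
  have swap: "(\<Sum>i\<in>UNIV. \<Sum>j\<in>UNIV. c i j * d $ i * (d $ i + d $ j))
      = (\<Sum>i\<in>UNIV. \<Sum>j\<in>UNIV. c i j * d $ j * (d $ i + d $ j))"
    by (subst sum.swap) (simp add: sym algebra_simps)
  have "2 * (\<Sum>i\<in>UNIV. d $ i * pair_sum c d $ i)
      = (\<Sum>i\<in>UNIV. \<Sum>j\<in>UNIV. c i j * d $ i * (d $ i + d $ j))
        + (\<Sum>i\<in>UNIV. \<Sum>j\<in>UNIV. c i j * d $ j * (d $ i + d $ j))"
    unfolding swap[symmetric] by (simp add: pair_sum_def sum_distrib_left algebra_simps)
  also have "\<dots> = (\<Sum>i\<in>UNIV. \<Sum>j\<in>UNIV. c i j * (d $ i + d $ j)\<^sup>2)"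
    by (simp add: sum.distrib[symmetric] power2_eq_square algebra_simps)
  finally show ?thesis .
qed

lemma double_sum_of_squares:
  fixes a :: "'a \<Rightarrow> real"
  shows "(\<Sum>i\<in>A. \<Sum>j\<in>A. (a i + a j)\<^sup>2)
      = 2 * real (card A) * (\<Sum>i\<in>A. (a i)\<^sup>2) + 2 * (\<Sum>i\<in>A. a i)\<^sup>2"
proof -
  have "(\<Sum>i\<in>A. \<Sum>j\<in>A. (a i + a j)\<^sup>2)
      = (\<Sum>i\<in>A. real (card A) * (a i)\<^sup>2 + (\<Sum>j\<in>A. (a j)\<^sup>2) + 2 * a i * (\<Sum>j\<in>A. a j))"
    by (simp add: power2_sum sum.distrib sum_distrib_left)
  also have "\<dots> = 2 * real (card A) * (\<Sum>i\<in>A. (a i)\<^sup>2) + 2 * (\<Sum>i\<in>A. a i)\<^sup>2"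
    by (simp add: sum.distrib sum_distrib_left[symmetric] sum_distrib_right[symmetric] power2_eq_square)
  finally show ?thesis .
qed

(* Lower bound for the quadratic form: replace c_ij by l off the diagonal and by 0 on it. *)
lemma quadratic_form_estimate:
  fixes d :: "real ^ 'n"
  assumes sym: "\<And>i j. c i j = c j i"
    and off: "\<And>i j. i \<noteq> j \<Longrightarrow> c i j \<ge> l" and diag: "\<And>i. c i i \<ge> 0"
  shows "l * ((real CARD('n) - 2) * (\<Sum>i\<in>UNIV. (d $ i)\<^sup>2) + (\<Sum>i\<in>UNIV. d $ i)\<^sup>2)
    \<le> (\<Sum>i\<in>UNIV. d $ i * pair_sum c d $ i)"
proof -
  define Q where "Q = (\<Sum>i\<in>UNIV. (d $ i)\<^sup>2)"
  define \<sigma> where "\<sigma> = (\<Sum>i\<in>UNIV. d $ i)"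
  have "(\<Sum>i\<in>UNIV. \<Sum>j\<in>UNIV. l * (d $ i + d $ j)\<^sup>2 - (if i = j then l * (2 * d $ i)\<^sup>2 else 0))
      \<le> (\<Sum>i\<in>UNIV. \<Sum>j\<in>UNIV. c i j * (d $ i + d $ j)\<^sup>2)"
  proof (intro sum_mono)
    fix i j
    show "l * (d $ i + d $ j)\<^sup>2 - (if i = j then l * (2 * d $ i)\<^sup>2 else 0) \<le> c i j * (d $ i + d $ j)\<^sup>2"
      using off[of i j] diag[of i] by (cases "i = j") (simp_all add: mult_right_mono)
  qed
  also have "\<dots> = 2 * (\<Sum>i\<in>UNIV. d $ i * pair_sum c d $ i)"
    by (rule pair_sum_inner_identity[OF sym, symmetric])
  finally have "l * (\<Sum>i\<in>UNIV. \<Sum>j\<in>UNIV. (d $ i + d $ j)\<^sup>2) - 4 * l * Q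
      \<le> 2 * (\<Sum>i\<in>UNIV. d $ i * pair_sum c d $ i)"
    by (simp add: Q_def sum_subtractf sum_distrib_left power_mult_distrib ac_simps)
  then show ?thesis
    using double_sum_of_squares[of "\<lambda>i. d $ i" UNIV]
    by (simp add: Q_def[symmetric] \<sigma>_def[symmetric] algebra_simps)
qed

(* Cauchy-Schwarz applied to the coordinates other than k. *)
lemma sum_squares_split:
  fixes d :: "real ^ 'n"
  assumes n2: "CARD('n) \<ge> 2"
  shows "(d $ k)\<^sup>2 + (\<Sum>j\<in>UNIV - {k}. \<bar>d $ j\<bar>)\<^sup>2 / (real CARD('n) - 1) \<le> (\<Sum>i\<in>UNIV. (d $ i)\<^sup>2)"
proof -
  have card: "real (card (UNIV - {k} :: 'n set)) = real CARD('n) - 1"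
    using n2 by (simp add: card_Diff_singleton of_nat_diff)
  have "(\<Sum>j\<in>UNIV - {k}. \<bar>d $ j\<bar>)\<^sup>2 \<le> (\<Sum>j\<in>UNIV - {k}. (d $ j)\<^sup>2) * (real CARD('n) - 1)"
    using sum_squared_le_sum_of_squares[of "\<lambda>j. \<bar>d $ j\<bar>" "UNIV - {k}"] unfolding card by simp
  then have "(\<Sum>j\<in>UNIV - {k}. \<bar>d $ j\<bar>)\<^sup>2 / (real CARD('n) - 1) \<le> (\<Sum>j\<in>UNIV - {k}. (d $ j)\<^sup>2)"
    using n2 by (simp add: divide_le_eq)
  then show ?thesis by (simp add: sum.remove[of UNIV k])
qed

(* The main estimate when the maximum norm is attained at a nonnegative coordinate d_k = M:
   either sum d >= (K - (n-2)) M and the row bound suffices, or the quadratic form bound,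
   Cauchy-Schwarz and the scalar inequality give K l M |d|_1 <= |P_c d|_inf |d|_1. *)
lemma pair_sum_estimate_at_max:
  fixes d :: "real ^ 'n"
  assumes n2: "CARD('n) \<ge> 2" and l: "l \<ge> 0" and sym: "\<And>i j. c i j = c j i"
    and off: "\<And>i j. i \<noteq> j \<Longrightarrow> c i j \<ge> l" and diag: "\<And>i. c i i \<ge> 0"
    and k: "d $ k = maxnorm d"
  shows "2 * (real CARD('n) - 1) * (real CARD('n) - 2) / (3 * real CARD('n) - 4) * l * maxnorm d
    \<le> maxnorm (pair_sum c d)"
proof -
  define N where "N = real CARD('n)"
  define K where "K = 2 * (N - 1) * (N - 2) / (3 * N - 4)"
  define M where "M = maxnorm d"
  define a where "a = maxnorm (pair_sum c d)"
  define \<sigma> where "\<sigma> = (\<Sum>i\<in>UNIV. d $ i)"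
  define Q where "Q = (\<Sum>i\<in>UNIV. (d $ i)\<^sup>2)"
  define u where "u = (\<Sum>j\<in>UNIV - {k}. \<bar>d $ j\<bar>)"
  have N: "N \<ge> 2" using n2 by (simp add: N_def)
  have M: "M \<ge> 0" and dk: "d $ k = M" using maxnorm_nonneg k by (simp_all add: M_def)
  have u: "u \<ge> 0" by (simp add: u_def sum_nonneg)
  have row: "l * ((N - 2) * M + \<sigma>) \<le> a"
    using row_estimate[where k = k and c = c and l = l and d = d] off diag maxnorm_ge[of d]
      maxnorm_ge[of "pair_sum c d" k]
    unfolding N_def \<sigma>_def a_def M_def k by force
  have "(\<Sum>i\<in>UNIV. d $ i * pair_sum c d $ i) \<le> (\<Sum>i\<in>UNIV. \<bar>d $ i\<bar>) * a"
    unfolding a_def by (rule sum_mult_le_l1_maxnorm)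
  also have "(\<Sum>i\<in>UNIV. \<bar>d $ i\<bar>) = M + u"
    by (simp add: u_def sum.remove[of UNIV k] dk M)
  finally have quad: "l * ((N - 2) * Q + \<sigma>\<^sup>2) \<le> (M + u) * a"
    using quadratic_form_estimate[where c = c and d = d, OF sym off diag]
    unfolding N_def Q_def \<sigma>_def by linarith
  have "K * l * M \<le> a"
  proof (cases "\<sigma> \<ge> (K - (N - 2)) * M")
    case True
    then have "l * (K * M) \<le> l * ((N - 2) * M + \<sigma>)"
      using l by (intro mult_left_mono) (simp_all add: left_diff_distrib)
    with row show ?thesis by (simp add: mult_ac)
  next
    case False
    have "K - (N - 2) = - ((N - 2)\<^sup>2 / (3 * N - 4))"
      using N by (simp add: K_def field_simps power2_eq_square)
    then have s: "- \<sigma> \<ge> (N - 2)\<^sup>2 / (3 * N - 4) * M" using False by simp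
    have "\<sigma> = M + (\<Sum>j\<in>UNIV - {k}. d $ j)" by (simp add: \<sigma>_def sum.remove[of UNIV k] dk)
    moreover have "\<bar>\<Sum>j\<in>UNIV - {k}. d $ j\<bar> \<le> u" unfolding u_def by (rule sum_abs)
    ultimately have "u \<ge> M + - \<sigma>" by linarith
    from quadratic_estimate[OF N M s this]
    have "K * M * (M + u) \<le> (N - 2) * (M\<^sup>2 + u\<^sup>2 / (N - 1)) + \<sigma>\<^sup>2" by (simp add: K_def)
    also have "\<dots> \<le> (N - 2) * Q + \<sigma>\<^sup>2"
      using sum_squares_split[OF n2, where d = d and k = k] N dk
      by (simp add: Q_def u_def N_def mult_left_mono)
    finally have "l * (K * M * (M + u)) \<le> l * ((N - 2) * Q + \<sigma>\<^sup>2)"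
      using l by (rule mult_left_mono)
    with quad have scaled: "(K * l * M) * (M + u) \<le> a * (M + u)" by (simp add: mult_ac)
    show "K * l * M \<le> a"
    proof (cases "M = 0")
      case True
      then show ?thesis by (simp add: a_def maxnorm_nonneg)
    next
      case False
      then have "M + u > 0" using M u by linarith
      with scaled show ?thesis by simp
    qed
  qed
  then show ?thesis unfolding K_def N_def M_def a_def .
qed

(* The general estimate, reducing to the previous lemma by passing to -d if necessary. *)
lemma pair_sum_estimate:
  fixes d :: "real ^ 'n"
  assumes n2: "CARD('n) \<ge> 2" and l: "l \<ge> 0" and sym: "\<And>i j. c i j = c j i"
    and off: "\<And>i j. i \<noteq> j \<Longrightarrow> c i j \<ge> l" and diag: "\<And>i. c i i \<ge> 0"
  shows "2 * (real CARD('n) - 1) * (real CARD('n) - 2) / (3 * real CARD('n) - 4) * l * maxnorm d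
    \<le> maxnorm (pair_sum c d)"
proof -
  obtain k where k: "\<bar>d $ k\<bar> = maxnorm d" using maxnorm_attained by blast
  show ?thesis
  proof (cases "d $ k \<ge> 0")
    case True
    then show ?thesis
      using pair_sum_estimate_at_max[where c = c and d = d and k = k, OF n2 l sym off diag] k by simp
  next
    case False
    then have "(- d) $ k = maxnorm (- d)" using k by (simp add: maxnorm_uminus)
    from pair_sum_estimate_at_max[where c = c, OF n2 l sym off diag this]
    show ?thesis by (simp add: maxnorm_uminus pair_sum_uminus)
  qed
qed

lemma inverse_lipschitz_maxnorm:
  fixes F :: "real ^ 'n \<Rightarrow> real ^ 'm"
  assumes K: "K > 0"
    and est: "\<And>x y. x \<in> U \<Longrightarrow> y \<in> U \<Longrightarrow> K * maxnorm (x - y) \<le> maxnorm (F x - F y)"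
  shows inverse_lipschitz_inj: "inj_on F U"
    and inverse_lipschitz_bound: "\<And>d d'. d \<in> F ` U \<Longrightarrow> d' \<in> F ` U \<Longrightarrow>
      maxnorm (the_inv_into U F d - the_inv_into U F d') \<le> maxnorm (d - d') / K"
proof -
  show inj: "inj_on F U"
  proof (rule inj_onI)
    fix x y assume "x \<in> U" "y \<in> U" "F x = F y"
    then have "K * maxnorm (x - y) \<le> 0" using est[of x y] by (simp add: maxnorm_zero)
    then have "maxnorm (x - y) \<le> 0" using K by (simp add: mult_le_0_iff)
    then show "x = y" using maxnorm_le_zero_imp_zero by fastforce
  qed
  fix d d' assume "d \<in> F ` U" "d' \<in> F ` U"
  then obtain x y where "x \<in> U" "y \<in> U" "d = F x" "d' = F y" by blast
  moreover from this have "the_inv_into U F d = x" "the_inv_into U F d' = y"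
    using the_inv_into_f_f[OF inj] by simp_all
  ultimately show "maxnorm (the_inv_into U F d - the_inv_into U F d') \<le> maxnorm (d - d') / K"
    using est K by (simp add: le_divide_eq mult.commute)
qed

lemma linear_pair_coordinate_sum: "linear (\<lambda>v :: real ^ 'n. v $ i + v $ j)"
  by (rule linearI) (simp_all add: algebra_simps)

lemma pairwise_difference_representation:
  fixes U :: "(real ^ 'n) set" and g g' :: "'n \<Rightarrow> 'n \<Rightarrow> real \<Rightarrow> real"
  assumes U: "convex U" and x: "x \<in> U" and y: "y \<in> U"
    and deriv: "\<And>i j t. (g i j has_real_derivative g' i j t) (at t)"
    and sym: "\<And>i j. g i j = g j i"
    and off: "\<And>z i j. z \<in> U \<Longrightarrow> i \<noteq> j \<Longrightarrow> g' i j (z $ i + z $ j) \<ge> l"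
    and diag: "\<And>z i. z \<in> U \<Longrightarrow> g' i i (2 * z $ i) \<ge> 0"
  obtains c where "\<And>i j. c i j = c j i" and "\<And>i j. i \<noteq> j \<Longrightarrow> c i j \<ge> l" and "\<And>i. c i i \<ge> 0"
    and "(\<chi> i. \<Sum>j\<in>UNIV. g i j (x $ i + x $ j)) - (\<chi> i. \<Sum>j\<in>UNIV. g i j (y $ i + y $ j))
      = pair_sum c (x - y)"
proof
  define c where "c i j = secant_slope (g i j) (g' i j) (x $ i + x $ j) (y $ i + y $ j)" for i j
  have "g' i j = g' j i" for i j
    using DERIV_unique[OF deriv[of i j]] deriv[of j i] sym[of i j] by auto
  then show "c i j = c j i" for i j
    unfolding c_def by (simp add: sym[of i j] add.commute)
  have slope: "\<exists>z\<in>U. c i j = g' i j (z $ i + z $ j)" for i j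
    unfolding c_def by (rule secant_slope_mean_value[OF U x y linear_pair_coordinate_sum deriv])
  show "c i j \<ge> l" if "i \<noteq> j" for i j
    using slope[of i j] off[OF _ that] by metis
  show "c i i \<ge> 0" for i
    using slope[of i i] diag by (metis mult_2)
  have "c i j * ((x - y) $ i + (x - y) $ j) = g i j (x $ i + x $ j) - g i j (y $ i + y $ j)" for i j
    unfolding c_def secant_slope_diff[of "g i j" _ _ "g' i j"] by (simp add: algebra_simps)
  then show "(\<chi> i. \<Sum>j\<in>UNIV. g i j (x $ i + x $ j)) - (\<chi> i. \<Sum>j\<in>UNIV. g i j (y $ i + y $ j))
      = pair_sum c (x - y)"
    by (simp add: vec_eq_iff pair_sum_def sum_subtractf)
qed

theorem theorem2p2:
  fixes U :: "(real ^ 'n) set"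
    and g g' :: "'n \<Rightarrow> 'n \<Rightarrow> real \<Rightarrow> real"
    and l :: real
    and F :: "real ^ 'n \<Rightarrow> real ^ 'n"
  assumes n3: "CARD('n) \<ge> 3"
    and convU: "convex U" and openU: "open U"
    and deriv: "\<And>i j t. (g i j has_real_derivative g' i j t) (at t)"
    and contd: "\<And>i j. continuous_on UNIV (g' i j)"
    and sym: "\<And>i j. g i j = g j i"
    and lpos: "l > 0"
    and offdiag: "\<And>x i j. x \<in> U \<Longrightarrow> i \<noteq> j \<Longrightarrow> g' i j (x $ i + x $ j) \<ge> l"
    and diag: "\<And>x i. x \<in> U \<Longrightarrow> g' i i (2 * x $ i) \<ge> 0"
    and F_def: "\<And>x. F x = (\<chi> i. \<Sum>j\<in>UNIV. g i j (x $ i + x $ j))"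
  shows "inj_on F U \<and>
    (\<forall>d\<in>F ` U. \<forall>d'\<in>F ` U.
       maxnorm (the_inv_into U F d - the_inv_into U F d')
         \<le> (3 * real CARD('n) - 4) / (2 * l * (real CARD('n) - 1) * (real CARD('n) - 2))
           * maxnorm (d - d'))"
proof -
  define N where "N = real CARD('n)"
  define K where "K = 2 * (N - 1) * (N - 2) / (3 * N - 4) * l"
  have N: "N \<ge> 3" using n3 by (simp add: N_def)
  have K: "K > 0" using N lpos by (simp add: K_def)
  have est: "K * maxnorm (x - y) \<le> maxnorm (F x - F y)" if xy: "x \<in> U" "y \<in> U" for x y
  proof -
    obtain c where csym: "\<And>i j. c i j = c j i" and coff: "\<And>i j. i \<noteq> j \<Longrightarrow> c i j \<ge> l"
      and cdiag: "\<And>i. c i i \<ge> 0"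
      and diff: "(\<chi> i. \<Sum>j\<in>UNIV. g i j (x $ i + x $ j)) - (\<chi> i. \<Sum>j\<in>UNIV. g i j (y $ i + y $ j))
        = pair_sum c (x - y)"
      using pairwise_difference_representation[OF convU xy deriv sym offdiag diag] by blast
    have "K * maxnorm (x - y) \<le> maxnorm (pair_sum c (x - y))"
      unfolding K_def N_def using n3 lpos by (intro pair_sum_estimate csym coff cdiag) simp_all
    then show ?thesis using diff by (simp add: F_def)
  qed
  have "maxnorm (d - d') / K
      = (3 * real CARD('n) - 4) / (2 * l * (real CARD('n) - 1) * (real CARD('n) - 2)) * maxnorm (d - d')"
    for d d' :: "real ^ 'n"
  proof -
    have "3 * N - 4 \<noteq> 0" "N - 1 \<noteq> 0" "N - 2 \<noteq> 0" "l \<noteq> 0" using N lpos by simp_all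
    then show ?thesis unfolding K_def N_def[symmetric] by (simp add: field_simps)
  qed
  then show ?thesis
    using inverse_lipschitz_inj[OF K est] inverse_lipschitz_bound[OF K est] by auto
qed

end
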